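(* Let $\kappa$ be an algebraically closed field of characteristic zero, complete for a non-trivial non-Archimedean absolute value. Let $a,b\in\kappa$ with $|a|=1$, let $L(z)=az+b$, let $f\in\mathcal{M}(\kappa)$ be a meromorphic function not identically zero, and let $m$ be a positive integer. Then for every $r>|b|$, $$m\!\left(r,\frac{f\circ L}{f}\right)=0,\qquad m\!\left(r,\frac{\Delta_L^mf}{f}\right)=0.$$
   Context: $\mathcal{M}(\kappa)$ is the field of meromorphic functions over $\kappa$ (quotients $g/h$ of power series converging on all of $\kappa$). For entire $g=\sum a_nz^n$, $\mu(r,g)=\max_n|a_n|r^n$; $\mu(r,g/h)=\mu(r,g)/\mu(r,h)$; $m(r,F)=\log^+\mu(r,F)$. $\Delta_Lf=f\circ L-f$, $\Delta_L^mf=\Delta_L(\Delta_L^{m-1}f)$. *)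

theory Defs
  imports Complex_Main "HOL-Computational_Algebra.Polynomial"
begin

definition nonarch_absv :: "('a::field \<Rightarrow> real) \<Rightarrow> bool" where
  "nonarch_absv absv \<longleftrightarrow>
     (\<forall>x. 0 \<le> absv x) \<and> (\<forall>x. absv x = 0 \<longleftrightarrow> x = 0) \<and>
     (\<forall>x y. absv (x * y) = absv x * absv y) \<and>
     (\<forall>x y. absv (x + y) \<le> max (absv x) (absv y))"

definition nontrivial_absv :: "('a::field \<Rightarrow> real) \<Rightarrow> bool" where
  "nontrivial_absv absv \<longleftrightarrow> (\<exists>x. x \<noteq> 0 \<and> absv x \<noteq> 1)"

definition conv_absv :: "('a::field \<Rightarrow> real) \<Rightarrow> (nat \<Rightarrow> 'a) \<Rightarrow> 'a \<Rightarrow> bool" where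
  "conv_absv absv X s \<longleftrightarrow> (\<forall>e>0. \<exists>N. \<forall>n\<ge>N. absv (X n - s) < e)"

definition cauchy_absv :: "('a::field \<Rightarrow> real) \<Rightarrow> (nat \<Rightarrow> 'a) \<Rightarrow> bool" where
  "cauchy_absv absv X \<longleftrightarrow> (\<forall>e>0. \<exists>N. \<forall>m\<ge>N. \<forall>n\<ge>N. absv (X m - X n) < e)"

definition complete_absv :: "('a::field \<Rightarrow> real) \<Rightarrow> bool" where
  "complete_absv absv \<longleftrightarrow> (\<forall>X. cauchy_absv absv X \<longrightarrow> (\<exists>s. conv_absv absv X s))"

definition alg_closed :: "'a::field itself \<Rightarrow> bool" where
  "alg_closed _ \<longleftrightarrow> (\<forall>p :: 'a poly. 0 < degree p \<longrightarrow> (\<exists>x. poly p x = 0))"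

text \<open>kappa: algebraically closed, complete for a nontrivial non-Archimedean absolute value
  (characteristic zero is imposed via the type class field_char_0).\<close>

definition kappa_field :: "('a::field \<Rightarrow> real) \<Rightarrow> bool" where
  "kappa_field absv \<longleftrightarrow> nonarch_absv absv \<and> nontrivial_absv absv \<and>
      complete_absv absv \<and> alg_closed TYPE('a)"

text \<open>An entire function is a power series (coefficient sequence) converging on all of kappa,
  i.e. absv (c n) * r ^ n tends to 0 for every r > 0.\<close>

definition entire :: "('a::field \<Rightarrow> real) \<Rightarrow> (nat \<Rightarrow> 'a) \<Rightarrow> bool" where
  "entire absv c \<longleftrightarrow> (\<forall>r>0. (\<lambda>n. absv (c n) * r ^ n) \<longlonglongrightarrow> 0)"

definition eval_ps :: "('a::field \<Rightarrow> real) \<Rightarrow> (nat \<Rightarrow> 'a) \<Rightarrow> 'a \<Rightarrow> 'a" where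
  "eval_ps absv c z = (THE s. conv_absv absv (\<lambda>N. \<Sum>n<N. c n * z ^ n) s)"

definition mu_ent :: "('a::field \<Rightarrow> real) \<Rightarrow> real \<Rightarrow> (nat \<Rightarrow> 'a) \<Rightarrow> real" where
  "mu_ent absv r c = (SUP n. absv (c n) * r ^ n)"

text \<open>The pair (g,h) of entire functions, h not identically zero, represents the
  meromorphic function F = g/h: F agrees with g/h wherever h does not vanish.\<close>

definition mero_rep :: "('a::field \<Rightarrow> real) \<Rightarrow> ('a \<Rightarrow> 'a) \<Rightarrow> (nat \<Rightarrow> 'a) \<Rightarrow> (nat \<Rightarrow> 'a) \<Rightarrow> bool" where
  "mero_rep absv F g h \<longleftrightarrow> entire absv g \<and> entire absv h \<and> (\<exists>n. h n \<noteq> 0) \<and>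
     (\<forall>z. eval_ps absv h z \<noteq> 0 \<longrightarrow> F z = eval_ps absv g z / eval_ps absv h z)"

text \<open>mu(r, g/h) = mu(r,g) / mu(r,h) (independent of the representation).\<close>

definition mu_mero :: "('a::field \<Rightarrow> real) \<Rightarrow> real \<Rightarrow> ('a \<Rightarrow> 'a) \<Rightarrow> real" where
  "mu_mero absv r F = (SOME v. \<exists>g h. mero_rep absv F g h \<and> v = mu_ent absv r g / mu_ent absv r h)"

definition m_prox :: "('a::field \<Rightarrow> real) \<Rightarrow> real \<Rightarrow> ('a \<Rightarrow> 'a) \<Rightarrow> real" where
  "m_prox absv r F = max 0 (ln (mu_mero absv r F))"

definition delta_L :: "('a \<Rightarrow> 'a) \<Rightarrow> ('a \<Rightarrow> 'a::ab_group_add) \<Rightarrow> 'a \<Rightarrow> 'a" where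
  "delta_L L f = (\<lambda>z. f (L z) - f z)"

end

theory Submission
  imports Defs "HOL-Computational_Algebra.Polynomial_FPS"
begin

text \<open>The Gauss norm mu(r,-) on entire series is multiplicative (the last maximal terms of
  two series produce a single dominant term of the product) and invariant under substitutions
  z \<mapsto> a z + b with |a| = 1, |b| \<le> r (binomial re-expansion can only shrink the weighted
  coefficients, and the inverse substitution is of the same kind). So for f = g/h every quotient
  f(L^k z)/f(z) = (g(L^k z) h(z)) / (h(L^k z) g(z)) has mu = 1. The iterated difference
  Delta_L^m f / f is an integer combination of these quotients; integers have absolute value at
  most 1, so the ultrametric inequality keeps its mu at most 1 and log^+ vanishes.\<close>

unbundle fps_syntax

lemma sum_lessThan_diff: "m \<le> n \<Longrightarrow> (\<Sum>k<n. x k) - (\<Sum>k<m. x k) = (\<Sum>k\<in>{m..<n}. x k)"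
  for x :: "nat \<Rightarrow> 'a::ab_group_add"
  using sum_diff_nat_ivl[of 0 m n x] by (simp add: atLeast0LessThan)

lemma sum_lessThan_eq_if_vanishing:
  fixes x :: "nat \<Rightarrow> 'a::ab_group_add"
  assumes "\<And>k. K \<le> k \<Longrightarrow> x k = 0" "K \<le> N"
  shows "(\<Sum>k<N. x k) = (\<Sum>k<K. x k)"
  using sum_lessThan_diff[OF assms(2), of x] assms(1) by (simp add: sum.neutral)

lemma fps_nth_Abs_fps_eq: "fps_nth (Abs_fps c) = c"
  by (rule ext) simp

lemma poly_eq_sum_lessThan:
  fixes p :: "'a::comm_semiring_1 poly"
  assumes "\<And>k. K \<le> k \<Longrightarrow> coeff p k = 0"
  shows "poly p z = (\<Sum>k<K. coeff p k * z ^ k)"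
proof (cases "degree p < K")
  case True
  have "poly p z = (\<Sum>k\<le>degree p. coeff p k * z ^ k)" by (rule poly_altdef)
  also have "\<dots> = (\<Sum>k<K. coeff p k * z ^ k)"
    by (rule sum.mono_neutral_left) (use True in \<open>auto simp: coeff_eq_0\<close>)
  finally show ?thesis .
next
  case False
  then have "lead_coeff p = 0" using assms by simp
  then have "p = 0" by simp
  then show ?thesis by simp
qed

lemma poly_truncate_fps:
  fixes F :: "'a::comm_semiring_1 fps"
  shows "poly (truncate_fps N F) z = (\<Sum>k<N. F $ k * z ^ k)"
  by (subst poly_eq_sum_lessThan[of N]) (auto simp: coeff_truncate_fps)

lemma sum_mult_sum_eq_cutoff_mult:
  fixes F G :: "'a::comm_ring_1 fps"
  shows "(\<Sum>k<N. F $ k * z ^ k) * (\<Sum>k<N. G $ k * z ^ k) =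
         (\<Sum>k<2 * N. (fps_cutoff N F * fps_cutoff N G) $ k * z ^ k)"
proof -
  let ?P = "truncate_fps N F * truncate_fps N G"
  have coeff_P: "coeff ?P k = (fps_cutoff N F * fps_cutoff N G) $ k" for k
    by (metis fps_of_poly_mult fps_of_poly_nth fps_of_poly_truncate)
  have "coeff ?P k = 0" if "2 * N \<le> k" for k
    unfolding coeff_P fps_mult_nth using that by (intro sum.neutral) auto
  then have "poly ?P z = (\<Sum>k<2 * N. coeff ?P k * z ^ k)" by (rule poly_eq_sum_lessThan)
  then show ?thesis by (simp add: poly_truncate_fps coeff_P)
qed

lemma sum_affine_power_reexpand:
  fixes c :: "nat \<Rightarrow> 'a::comm_ring_1"
  shows "(\<Sum>n<N. c n * (a * z + b) ^ n) =
         (\<Sum>k<N. a ^ k * (\<Sum>n<N. c n * of_nat (n choose k) * b ^ (n - k)) * z ^ k)"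
proof -
  have binomial: "(a * z + b) ^ n = (\<Sum>k<N. of_nat (n choose k) * (a * z) ^ k * b ^ (n - k))"
    if "n < N" for n
  proof -
    have "(a * z + b) ^ n = (\<Sum>k\<le>n. of_nat (n choose k) * (a * z) ^ k * b ^ (n - k))"
      by (rule binomial_ring)
    also have "\<dots> = (\<Sum>k<N. of_nat (n choose k) * (a * z) ^ k * b ^ (n - k))"
      by (rule sum.mono_neutral_left) (use that in \<open>auto simp: binomial_eq_0\<close>)
    finally show ?thesis .
  qed
  have "(\<Sum>n<N. c n * (a * z + b) ^ n) =
        (\<Sum>n<N. \<Sum>k<N. c n * (of_nat (n choose k) * (a * z) ^ k * b ^ (n - k)))"
    by (rule sum.cong) (auto simp: binomial sum_distrib_left)
  also have "\<dots> = (\<Sum>k<N. \<Sum>n<N. c n * (of_nat (n choose k) * (a * z) ^ k * b ^ (n - k)))"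
    by (rule sum.swap)
  also have "\<dots> = (\<Sum>k<N. a ^ k * (\<Sum>n<N. c n * of_nat (n choose k) * b ^ (n - k)) * z ^ k)"
    by (rule sum.cong) (auto simp: sum_distrib_left sum_distrib_right power_mult_distrib mult_ac)
  finally show ?thesis .
qed

lemma affine_funpow:
  fixes a b :: "'a::comm_ring_1"
  shows "((\<lambda>z. a * z + b) ^^ k) z = a ^ k * z + (\<Sum>j<k. a ^ j) * b"
proof (induction k)
  case (Suc k)
  have "(\<Sum>j<Suc k. a ^ j) = 1 + a * (\<Sum>j<k. a ^ j)"
    by (subst sum.lessThan_Suc_shift) (simp add: sum_distrib_left)
  then show ?case using Suc by (simp add: algebra_simps)
qed simp

lemma delta_L_funpow_int_combination:
  "\<exists>w :: nat \<Rightarrow> int. \<forall>z. (delta_L L ^^ m) f z = (\<Sum>k\<le>m. of_int (w k) * f ((L ^^ k) z))"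
proof (induction m)
  case 0
  show ?case by (intro exI[of _ "\<lambda>k. 1"]) simp
next
  case (Suc m)
  then obtain w where w: "\<forall>z. (delta_L L ^^ m) f z = (\<Sum>k\<le>m. of_int (w k) * f ((L ^^ k) z))"
    by blast
  define w' where "w' k = (if k = 0 then 0 else w (k - 1)) - (if k \<le> m then w k else 0)" for k
  have "(delta_L L ^^ Suc m) f z = (\<Sum>k\<le>Suc m. of_int (w' k) * f ((L ^^ k) z))" for z
  proof -
    have "(delta_L L ^^ Suc m) f z = (delta_L L ^^ m) f (L z) - (delta_L L ^^ m) f z"
      by (simp add: delta_L_def)
    also have "\<dots> = (\<Sum>k\<le>m. of_int (w k) * f ((L ^^ Suc k) z))
                   - (\<Sum>k\<le>m. of_int (w k) * f ((L ^^ k) z))"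
      using w by (simp add: funpow_swap1)
    also have "(\<Sum>k\<le>m. of_int (w k) * f ((L ^^ Suc k) z)) =
        (\<Sum>k\<le>Suc m. of_int (if k = 0 then 0 else w (k - 1)) * f ((L ^^ k) z))"
      by (subst sum.atMost_Suc_shift) simp
    also have "(\<Sum>k\<le>m. of_int (w k) * f ((L ^^ k) z)) =
        (\<Sum>k\<le>Suc m. of_int (if k \<le> m then w k else 0) * f ((L ^^ k) z))"
      by (subst sum.atMost_Suc) simp
    finally show ?thesis unfolding w'_def by (simp add: sum_subtractf left_diff_distrib)
  qed
  then show ?case by blast
qed

lemma mult_less_mult_if_one_less:
  fixes a b X Y :: "'a::linordered_semiring_strict"
  assumes "0 \<le> a" "0 \<le> b" "a \<le> X" "b \<le> Y" "a < X \<or> b < Y" "0 < X" "0 < Y"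
  shows "a * b < X * Y"
proof (cases "a < X")
  case True
  have "a * b \<le> a * Y" using assms by (intro mult_left_mono) auto
  also have "\<dots> < X * Y" using True assms by (intro mult_strict_right_mono) auto
  finally show ?thesis .
next
  case False
  then have "b < Y" using assms by auto
  have "a * b \<le> X * b" using assms by (intro mult_right_mono) auto
  also have "\<dots> < X * Y" using \<open>b < Y\<close> assms by (intro mult_strict_left_mono) auto
  finally show ?thesis .
qed

section \<open>Complete non-Archimedean fields\<close>

locale complete_nonarch_field =
  fixes absv :: "'a::field \<Rightarrow> real"
  assumes nonarch: "nonarch_absv absv"
    and complete: "complete_absv absv"
    and nontrivial: "nontrivial_absv absv"
begin

lemma absv_nonneg [simp]: "0 \<le> absv x"
  and absv_eq_0_iff [simp]: "absv x = 0 \<longleftrightarrow> x = 0"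
  and absv_mult [simp]: "absv (x * y) = absv x * absv y"
  and absv_add_le_max: "absv (x + y) \<le> max (absv x) (absv y)"
  using nonarch unfolding nonarch_absv_def by blast+

lemma absv_zero [simp]: "absv 0 = 0"
  by simp

lemma absv_pos_iff [simp]: "0 < absv x \<longleftrightarrow> x \<noteq> 0"
  using absv_nonneg[of x] absv_eq_0_iff[of x] by linarith

lemma absv_one [simp]: "absv 1 = 1"
proof -
  have "absv 1 * absv 1 = absv 1 * 1" using absv_mult[of 1 1] by simp
  then show ?thesis by (subst (asm) mult_left_cancel) simp_all
qed

lemma absv_minus [simp]: "absv (- x) = absv x"
proof -
  have "absv (-1) * absv (-1) = 1" using absv_mult[of "-1" "-1"] by simp
  then have "(absv (-1) - 1) * (absv (-1) + 1) = 0" by (simp add: algebra_simps)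
  moreover have "absv (-1) + 1 > 0" using absv_nonneg[of "-1"] by linarith
  ultimately have "absv (-1) = 1" by simp
  then show ?thesis using absv_mult[of "-1" x] by simp
qed

lemma absv_power [simp]: "absv (x ^ n) = absv x ^ n"
  by (induction n) auto

lemma absv_inverse [simp]: "absv (inverse x) = inverse (absv x)"
proof (cases "x = 0")
  case False
  then have "absv x * absv (inverse x) = 1" by (simp flip: absv_mult)
  then show ?thesis by (metis inverse_unique)
qed simp

lemma absv_minus_commute: "absv (x - y) = absv (y - x)"
  by (metis absv_minus minus_diff_eq)

lemma absv_diff_le_max: "absv (x - y) \<le> max (absv x) (absv y)"
  using absv_add_le_max[of x "- y"] by simp

lemma absv_add_le: "absv x \<le> B \<Longrightarrow> absv y \<le> B \<Longrightarrow> absv (x + y) \<le> B"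
  using absv_add_le_max[of x y] by simp

lemma absv_sum_le: "(\<And>i. i \<in> S \<Longrightarrow> absv (f i) \<le> B) \<Longrightarrow> 0 \<le> B \<Longrightarrow> absv (sum f S) \<le> B"
  by (induction S rule: infinite_finite_induct) (auto intro: absv_add_le)

lemma absv_sum_less:
  "finite S \<Longrightarrow> 0 < B \<Longrightarrow> (\<And>i. i \<in> S \<Longrightarrow> absv (f i) < B) \<Longrightarrow> absv (sum f S) < B"
  by (induction S rule: finite_induct) (auto intro: le_less_trans[OF absv_add_le_max])

lemma absv_of_nat_le_1: "absv (of_nat n) \<le> 1"
  by (induction n) (auto intro: absv_add_le)

lemma absv_of_int_le_1: "absv (of_int n) \<le> 1"
  by (cases n rule: int_cases) (metis absv_of_nat_le_1 of_int_of_nat_eq absv_minus of_int_minus)+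

lemma absv_geometric_sum_mult_le: "absv a = 1 \<Longrightarrow> absv ((\<Sum>j<k. a ^ j) * b) \<le> absv b"
  using absv_sum_le[of "{..<k}" "\<lambda>j. a ^ j" 1] by (simp add: mult_left_le_one_le)

lemma absv_add_eq_dominant: assumes "absv y < absv x" shows "absv (x + y) = absv x"
proof -
  have "absv x \<le> max (absv (x + y)) (absv y)" using absv_diff_le_max[of "x + y" y] by simp
  then show ?thesis using absv_add_le_max[of x y] assms by (auto simp: max_def split: if_splits)
qed

lemma absv_le_epsilon_imp_eq: "(\<And>e. 0 < e \<Longrightarrow> absv (x - y) \<le> e) \<Longrightarrow> x = y"
  using field_le_epsilon[of "absv (x - y)" 0] absv_nonneg[of "x - y"] by simp

lemma exists_absv_small: assumes "0 < e" shows "\<exists>z. z \<noteq> 0 \<and> absv z < e"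
proof -
  obtain x where x: "x \<noteq> 0" "absv x \<noteq> 1" using nontrivial unfolding nontrivial_absv_def by blast
  define t where "t = (if absv x < 1 then x else inverse x)"
  have t: "t \<noteq> 0" "absv t < 1"
    using x by (auto simp: t_def inverse_less_1_iff)
  have "(\<lambda>n. absv t ^ n) \<longlonglongrightarrow> 0" using t by (intro LIMSEQ_power_zero) simp_all
  from order_tendstoD(2)[OF this assms] obtain n where "absv t ^ n < e"
    by (auto simp: eventually_sequentially)
  then show ?thesis using t by (intro exI[of _ "t ^ n"]) simp
qed

lemma conv_absv_unique: "conv_absv absv X s \<Longrightarrow> conv_absv absv X t \<Longrightarrow> s = t"
proof (rule absv_le_epsilon_imp_eq)
  fix e :: real assume "conv_absv absv X s" "conv_absv absv X t" "0 < e"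
  then obtain N1 N2 where "\<forall>n\<ge>N1. absv (X n - s) < e" "\<forall>n\<ge>N2. absv (X n - t) < e"
    unfolding conv_absv_def by meson
  moreover define n where "n = max N1 N2"
  ultimately have "absv (X n - t) < e" "absv (X n - s) < e" by simp_all
  then have "absv ((X n - t) - (X n - s)) < e"
    using absv_diff_le_max[of "X n - t" "X n - s"] by linarith
  then show "absv (s - t) \<le> e" by simp
qed

lemma conv_absv_eventually_const: "\<forall>n\<ge>N. X n = s \<Longrightarrow> conv_absv absv X s"
  unfolding conv_absv_def by (intro allI impI exI[of _ N]) simp

lemma conv_absv_add:
  assumes "conv_absv absv X s" "conv_absv absv Y t"
  shows "conv_absv absv (\<lambda>n. X n + Y n) (s + t)"
  unfolding conv_absv_def
proof (intro allI impI)
  fix e :: real assume "0 < e"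
  then obtain N1 N2 where N: "\<forall>n\<ge>N1. absv (X n - s) < e" "\<forall>n\<ge>N2. absv (Y n - t) < e"
    using assms unfolding conv_absv_def by meson
  have "absv (X n + Y n - (s + t)) < e" if "max N1 N2 \<le> n" for n
    using absv_add_le_max[of "X n - s" "Y n - t"] N(1)[rule_format, of n] N(2)[rule_format, of n]
      that by (simp add: add_diff_add)
  then show "\<exists>N. \<forall>n\<ge>N. absv (X n + Y n - (s + t)) < e" by blast
qed

lemma conv_absv_bounded: assumes "conv_absv absv X s" shows "\<exists>B. \<forall>n. absv (X n) \<le> B"
proof -
  obtain N where N: "\<forall>n\<ge>N. absv (X n - s) < 1" using assms unfolding conv_absv_def by force
  define B where "B = max (max 1 (absv s)) (Max ((\<lambda>n. absv (X n)) ` {..N}))"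
  have "absv (X n) \<le> B" for n
  proof (cases "n \<le> N")
    case False
    then have "absv ((X n - s) + s) \<le> max 1 (absv s)"
      using absv_add_le_max[of "X n - s" s] N[rule_format, of n] by simp
    then show ?thesis unfolding B_def by auto
  qed (auto simp: B_def intro: max.coboundedI2)
  then show ?thesis by blast
qed

lemma conv_absv_mult:
  assumes "conv_absv absv X s" "conv_absv absv Y t"
  shows "conv_absv absv (\<lambda>n. X n * Y n) (s * t)"
  unfolding conv_absv_def
proof (intro allI impI)
  fix e :: real assume "0 < e"
  obtain B where B: "\<forall>n. absv (X n) \<le> B" using conv_absv_bounded[OF assms(1)] by blast
  define C where "C = max 1 (max B (absv t))"
  have C: "0 < C" "B \<le> C" "absv t \<le> C" unfolding C_def by auto
  obtain N1 N2 where N: "\<forall>n\<ge>N1. absv (X n - s) < e / C" "\<forall>n\<ge>N2. absv (Y n - t) < e / C"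
    using assms \<open>0 < e\<close> C(1) unfolding conv_absv_def by (meson divide_pos_pos)
  have "absv (X n * Y n - s * t) < e" if "max N1 N2 \<le> n" for n
  proof -
    have "absv (X n) * absv (Y n - t) \<le> C * absv (Y n - t)"
      using B C by (intro mult_right_mono) (auto intro: order_trans)
    also have "\<dots> < C * (e / C)" using C N that by (intro mult_strict_left_mono) auto
    finally have 1: "absv (X n * (Y n - t)) < e" using C by simp
    have "absv t * absv (X n - s) \<le> C * absv (X n - s)"
      using C by (intro mult_right_mono) auto
    also have "\<dots> < C * (e / C)" using C N that by (intro mult_strict_left_mono) auto
    finally have 2: "absv (t * (X n - s)) < e" using C by simp
    have "X n * Y n - s * t = X n * (Y n - t) + t * (X n - s)"
      by (simp add: algebra_simps)
    then show ?thesis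
      using absv_add_le_max[of "X n * (Y n - t)" "t * (X n - s)"] 1 2 by auto
  qed
  then show "\<exists>N. \<forall>n\<ge>N. absv (X n * Y n - s * t) < e" by blast
qed

lemma conv_absv_diff:
  assumes "conv_absv absv X s" "conv_absv absv Y t"
  shows "conv_absv absv (\<lambda>n. X n - Y n) (s - t)"
proof -
  have "conv_absv absv (\<lambda>n. - 1 * Y n) (- 1 * t)"
    by (rule conv_absv_mult[OF conv_absv_eventually_const assms(2)]) simp
  from conv_absv_add[OF assms(1) this] show ?thesis by simp
qed

definition series_sum :: "(nat \<Rightarrow> 'a) \<Rightarrow> 'a" where
  "series_sum x = (THE s. conv_absv absv (\<lambda>N. \<Sum>n<N. x n) s)"

lemma series_sum_eqI: "conv_absv absv (\<lambda>N. \<Sum>n<N. x n) s \<Longrightarrow> series_sum x = s"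
  unfolding series_sum_def using conv_absv_unique by blast

lemma conv_series_sum:
  assumes "(\<lambda>n. absv (x n)) \<longlonglongrightarrow> 0"
  shows "conv_absv absv (\<lambda>N. \<Sum>n<N. x n) (series_sum x)"
proof -
  have "cauchy_absv absv (\<lambda>N. \<Sum>n<N. x n)"
    unfolding cauchy_absv_def
  proof (intro allI impI)
    fix e :: real assume "0 < e"
    from order_tendstoD(2)[OF assms half_gt_zero[OF this]]
    obtain N where N: "\<forall>n\<ge>N. absv (x n) < e / 2"
      by (auto simp: eventually_sequentially)
    have block: "absv ((\<Sum>k<n. x k) - (\<Sum>k<m. x k)) < e" if "N \<le> m" "m \<le> n" for m n
    proof -
      have "absv (sum x {m..<n}) \<le> e / 2"
        using N that \<open>0 < e\<close> by (intro absv_sum_le) (auto intro: less_imp_le)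
      then show ?thesis using \<open>0 < e\<close> by (simp add: sum_lessThan_diff that)
    qed
    have "absv ((\<Sum>k<m. x k) - (\<Sum>k<n. x k)) < e" if "N \<le> m" "N \<le> n" for m n
      using block[of m n] block[of n m] that absv_minus_commute by (cases "m \<le> n") auto
    then show "\<exists>N. \<forall>m\<ge>N. \<forall>n\<ge>N. absv ((\<Sum>k<m. x k) - (\<Sum>k<n. x k)) < e" by blast
  qed
  then obtain s where "conv_absv absv (\<lambda>N. \<Sum>n<N. x n) s"
    using complete unfolding complete_absv_def by blast
  then show ?thesis using series_sum_eqI by metis
qed

lemma absv_series_tail_le:
  assumes "conv_absv absv (\<lambda>N. \<Sum>n<N. x n) s" "\<And>n. N \<le> n \<Longrightarrow> absv (x n) \<le> B"
  shows "absv (s - (\<Sum>n<N. x n)) \<le> B"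
proof (rule field_le_epsilon)
  fix e :: real assume "0 < e"
  then obtain M where M: "\<forall>n\<ge>M. absv ((\<Sum>k<n. x k) - s) < e"
    using assms(1) unfolding conv_absv_def by blast
  have B: "0 \<le> B" using assms(2)[of N] absv_nonneg[of "x N"] by linarith
  have "absv ((\<Sum>k<max M N. x k) - (\<Sum>n<N. x n)) \<le> B"
    using assms(2) B by (subst sum_lessThan_diff) (auto intro!: absv_sum_le)
  moreover have "absv (s - (\<Sum>k<max M N. x k)) < e"
    using M absv_minus_commute by (metis max.cobounded1)
  ultimately show "absv (s - (\<Sum>n<N. x n)) \<le> B + e"
    using absv_add_le_max[of "s - (\<Sum>k<max M N. x k)" "(\<Sum>k<max M N. x k) - (\<Sum>n<N. x n)"]
      B \<open>0 < e\<close> by simp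
qed

lemma absv_series_sum_le:
  "(\<lambda>n. absv (x n)) \<longlonglongrightarrow> 0 \<Longrightarrow> (\<And>n. absv (x n) \<le> B) \<Longrightarrow> absv (series_sum x) \<le> B"
  using absv_series_tail_le[OF conv_series_sum, of x 0 B] by simp

section \<open>Entire series and the Gauss norm\<close>

lemma entire_iff_bounded: "entire absv c \<longleftrightarrow> (\<forall>r>0. \<exists>B. \<forall>n. absv (c n) * r ^ n \<le> B)"
proof
  assume entire: "entire absv c"
  show "\<forall>r>0. \<exists>B. \<forall>n. absv (c n) * r ^ n \<le> B"
  proof (intro allI impI)
    fix r :: real assume "0 < r"
    then have "(\<lambda>n. absv (c n) * r ^ n) \<longlonglongrightarrow> 0" using entire unfolding entire_def by blast
    then have "Bseq (\<lambda>n. absv (c n) * r ^ n)" by (rule convergent_imp_Bseq[OF convergentI])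
    then show "\<exists>B. \<forall>n. absv (c n) * r ^ n \<le> B"
      unfolding Bseq_def by (metis abs_ge_self order_trans real_norm_def)
  qed
next
  assume bounded: "\<forall>r>0. \<exists>B. \<forall>n. absv (c n) * r ^ n \<le> B"
  show "entire absv c" unfolding entire_def
  proof (intro allI impI)
    fix r :: real assume r: "0 < r"
    have "0 < 2 * r" using r by simp
    then obtain B where B: "\<forall>n. absv (c n) * (2 * r) ^ n \<le> B" using bounded by blast
    have le: "absv (c n) * r ^ n \<le> B * inverse (2 ^ n)" for n
    proof -
      have "absv (c n) * r ^ n = absv (c n) * (2 * r) ^ n * inverse (2 ^ n)"
        by (simp add: power_mult_distrib)
      also have "\<dots> \<le> B * inverse (2 ^ n)" using B by (intro mult_right_mono) auto
      finally show ?thesis .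
    qed
    have lim: "(\<lambda>n. B * inverse (2 ^ n)) \<longlonglongrightarrow> 0"
      by (rule tendsto_mult_right_zero, rule LIMSEQ_inverse_realpow_zero) simp
    show "(\<lambda>n. absv (c n) * r ^ n) \<longlonglongrightarrow> 0"
      by (rule tendsto_sandwich[OF _ _ tendsto_const lim]) (use le r in \<open>simp_all\<close>)
  qed
qed

lemma entire_eventually_le:
  assumes "entire absv c" "0 < r" "0 < d"
  obtains N where "\<And>n. N \<le> n \<Longrightarrow> absv (c n) * r ^ n \<le> d"
proof -
  have "(\<lambda>n. absv (c n) * r ^ n) \<longlonglongrightarrow> 0" using assms unfolding entire_def by blast
  from order_tendstoD(2)[OF this assms(3)] show ?thesis
    by (auto simp: eventually_sequentially intro: that less_imp_le)
qed

lemma entire_terms_tendsto_0: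
  assumes "entire absv c"
  shows "(\<lambda>n. absv (c n * z ^ n)) \<longlonglongrightarrow> 0"
proof (rule tendsto_sandwich[OF _ _ tendsto_const])
  define r where "r = absv z + 1"
  have r: "0 < r" "absv z \<le> r" unfolding r_def by (simp_all add: add_nonneg_pos)
  show "(\<lambda>n. absv (c n) * r ^ n) \<longlonglongrightarrow> 0" using assms r unfolding entire_def by blast
  show "\<forall>\<^sub>F n in sequentially. absv (c n * z ^ n) \<le> absv (c n) * r ^ n"
    using r by (intro always_eventually allI) (simp add: mult_left_mono power_mono)
qed simp

lemma eval_ps_eq_series_sum: "eval_ps absv c z = series_sum (\<lambda>n. c n * z ^ n)"
  unfolding eval_ps_def series_sum_def ..

lemma conv_eval_ps: "entire absv c \<Longrightarrow> conv_absv absv (\<lambda>N. \<Sum>n<N. c n * z ^ n) (eval_ps absv c z)"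
  unfolding eval_ps_eq_series_sum by (rule conv_series_sum[OF entire_terms_tendsto_0])

lemma conv_finite_series:
  "(\<And>k. K \<le> k \<Longrightarrow> c k = 0) \<Longrightarrow>
     conv_absv absv (\<lambda>N. \<Sum>n<N. c n * z ^ n) (\<Sum>k<K. c k * z ^ k)"
  by (rule conv_absv_eventually_const[of K]) (auto intro: sum_lessThan_eq_if_vanishing)

lemma eval_ps_finite:
  "(\<And>k. K \<le> k \<Longrightarrow> c k = 0) \<Longrightarrow> eval_ps absv c z = (\<Sum>k<K. c k * z ^ k)"
  unfolding eval_ps_eq_series_sum by (rule series_sum_eqI, rule conv_finite_series)

lemma absv_eval_ps_minus_poly_le:
  assumes "entire absv c" "\<And>k. absv (c k - d k) * absv z ^ k \<le> e" "\<And>k. K \<le> k \<Longrightarrow> d k = 0"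
  shows "absv (eval_ps absv c z - (\<Sum>k<K. d k * z ^ k)) \<le> e"
proof -
  have "conv_absv absv (\<lambda>N. (\<Sum>n<N. c n * z ^ n) - (\<Sum>n<N. d n * z ^ n))
        (eval_ps absv c z - (\<Sum>k<K. d k * z ^ k))"
    by (intro conv_absv_diff conv_eval_ps conv_finite_series assms)
  then have "conv_absv absv (\<lambda>N. \<Sum>n<N. (c n - d n) * z ^ n) (eval_ps absv c z - (\<Sum>k<K. d k * z ^ k))"
    by (simp add: sum_subtractf left_diff_distrib)
  from absv_series_tail_le[OF this, of 0 e] assms(2) show ?thesis by simp
qed

lemma mu_ent_upper: "entire absv c \<Longrightarrow> 0 < r \<Longrightarrow> absv (c n) * r ^ n \<le> mu_ent absv r c"
  unfolding mu_ent_def entire_iff_bounded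
  by (rule cSUP_upper) (auto simp: bdd_above_def)

lemma mu_ent_least: "(\<And>n. absv (c n) * r ^ n \<le> B) \<Longrightarrow> mu_ent absv r c \<le> B"
  unfolding mu_ent_def by (rule cSUP_least) auto

lemma mu_ent_nonneg: "entire absv c \<Longrightarrow> 0 < r \<Longrightarrow> 0 \<le> mu_ent absv r c"
  using mu_ent_upper[of c r 0] absv_nonneg[of "c 0"] by (simp del: absv_nonneg)

lemma mu_ent_pos_iff:
  assumes "entire absv c" "0 < r"
  shows "0 < mu_ent absv r c \<longleftrightarrow> (\<exists>n. c n \<noteq> 0)"
proof
  assume pos: "0 < mu_ent absv r c"
  show "\<exists>n. c n \<noteq> 0"
  proof (rule ccontr)
    assume "\<not> (\<exists>n. c n \<noteq> 0)"
    then have "mu_ent absv r c \<le> 0" by (intro mu_ent_least) simp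
    with pos show False by simp
  qed
next
  assume "\<exists>n. c n \<noteq> 0"
  then obtain n where "0 < absv (c n) * r ^ n"
    using assms(2) by (meson absv_pos_iff mult_pos_pos zero_less_power)
  then show "0 < mu_ent absv r c" using mu_ent_upper[OF assms, of n] by linarith
qed

lemma mu_ent_attained:
  assumes "entire absv c" "0 < r"
  obtains n where "mu_ent absv r c = absv (c n) * r ^ n"
proof (cases "\<exists>n. c n \<noteq> 0")
  case False
  then have "mu_ent absv r c = 0" using mu_ent_least[of c r 0] mu_ent_nonneg[OF assms] by force
  then show ?thesis using False by (intro that[of 0]) simp
next
  case True
  let ?t = "\<lambda>n. absv (c n) * r ^ n"
  obtain k where k: "0 < ?t k" using True assms(2) by (meson absv_pos_iff mult_pos_pos zero_less_power)
  obtain N where N: "\<And>n. N \<le> n \<Longrightarrow> ?t n \<le> ?t k / 2"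
    using entire_eventually_le[OF assms half_gt_zero[OF k]] by blast
  define M where "M = Max (?t ` {..N})"
  have bound: "?t n \<le> M" for n
  proof (cases "n \<le> N")
    case False
    have "k \<le> N"
    proof (rule ccontr)
      assume "\<not> k \<le> N"
      then have "?t k \<le> ?t k / 2" using N[of k] by simp
      then show False using k by linarith
    qed
    then have "?t k \<le> M" unfolding M_def by (intro Max_ge) auto
    then show ?thesis using N[of n] False k by linarith
  qed (unfold M_def, intro Max_ge, auto)
  have "M \<in> ?t ` {..N}" unfolding M_def by (rule Max_in) auto
  then obtain j where j: "M = ?t j" by blast
  have "mu_ent absv r c = M"
    using mu_ent_least[of c r M, OF bound] mu_ent_upper[OF assms, of j] j by linarith
  with j show ?thesis by (intro that[of j]) simp
qed

lemma mu_ent_attained_last: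
  assumes "entire absv c" "0 < r" "0 < mu_ent absv r c"
  obtains i where "mu_ent absv r c = absv (c i) * r ^ i"
    and "\<And>j. i < j \<Longrightarrow> absv (c j) * r ^ j < mu_ent absv r c"
proof -
  let ?S = "{i. absv (c i) * r ^ i = mu_ent absv r c}"
  obtain N where N: "\<And>n. N \<le> n \<Longrightarrow> absv (c n) * r ^ n \<le> mu_ent absv r c / 2"
    using entire_eventually_le[OF assms(1,2) half_gt_zero[OF assms(3)]] by blast
  have "i < N" if "i \<in> ?S" for i
    using that assms(3) N[of i] by (cases "i < N") auto
  then have "?S \<subseteq> {..<N}" by (simp add: subset_iff)
  then have finite: "finite ?S" using finite_lessThan by (rule finite_subset)
  obtain n where "mu_ent absv r c = absv (c n) * r ^ n" using mu_ent_attained[OF assms(1,2)] .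
  then have "n \<in> ?S" by simp
  then have "?S \<noteq> {}" by blast
  with finite have "Max ?S \<in> ?S" by (rule Max_in)
  moreover have "absv (c j) * r ^ j < mu_ent absv r c" if "Max ?S < j" for j
  proof -
    have "j \<notin> ?S" using that Max_ge[OF finite, of j] by (meson not_le)
    then show ?thesis using mu_ent_upper[OF assms(1,2), of j] by simp
  qed
  ultimately show ?thesis by (intro that[of "Max ?S"]) auto
qed

text \<open>Entire functions are handled as formal power series, so that the ring structure of
  \<open>'a fps\<close> is available.\<close>

abbreviation entire_fps :: "'a fps \<Rightarrow> bool" where
  "entire_fps F \<equiv> entire absv (fps_nth F)"

abbreviation eval_fps :: "'a fps \<Rightarrow> 'a \<Rightarrow> 'a" where
  "eval_fps F \<equiv> eval_ps absv (fps_nth F)"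

abbreviation gauss_norm :: "real \<Rightarrow> 'a fps \<Rightarrow> real" where
  "gauss_norm r F \<equiv> mu_ent absv r (fps_nth F)"

lemma absv_mult_weighted:
  "i \<le> k \<Longrightarrow> absv (x * y) * r ^ k = (absv x * r ^ i) * (absv y * r ^ (k - i))"
  by (simp add: mult_ac flip: power_add)

lemma absv_fps_mult_nth_weighted_le:
  assumes "\<And>i. absv (F $ i) * r ^ i \<le> X" "\<And>j. absv (G $ j) * r ^ j \<le> Y"
    and "0 \<le> X" "0 \<le> Y" "0 < r"
  shows "absv ((F * G) $ k) * r ^ k \<le> X * Y"
proof -
  have "absv ((F * G) $ k) \<le> X * Y / r ^ k"
    unfolding fps_mult_nth
  proof (rule absv_sum_le)
    fix i assume "i \<in> {0..k}"
    then have "absv (F $ i * G $ (k - i)) * r ^ k =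
               (absv (F $ i) * r ^ i) * (absv (G $ (k - i)) * r ^ (k - i))"
      by (intro absv_mult_weighted) simp
    also have "\<dots> \<le> X * Y" using assms by (intro mult_mono) auto
    finally show "absv (F $ i * G $ (k - i)) \<le> X * Y / r ^ k"
      using assms(5) by (simp add: pos_le_divide_eq)
  qed (use assms in simp)
  then show ?thesis using assms(5) by (simp add: pos_le_divide_eq)
qed

lemma weighted_le_max_mu_ent:
  assumes "entire absv c" "entire absv d" "0 < r" "absv x \<le> max (absv (c k)) (absv (d k))"
  shows "absv x * r ^ k \<le> max (mu_ent absv r c) (mu_ent absv r d)"
proof -
  have "absv x * r ^ k \<le> max (absv (c k)) (absv (d k)) * r ^ k"
    using assms(3,4) by (intro mult_right_mono) auto
  also have "\<dots> = max (absv (c k) * r ^ k) (absv (d k) * r ^ k)"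
    using assms(3) by (simp add: max_mult_distrib_right)
  also have "\<dots> \<le> max (mu_ent absv r c) (mu_ent absv r d)"
    using mu_ent_upper[OF assms(1,3), of k] mu_ent_upper[OF assms(2,3), of k] by auto
  finally show ?thesis .
qed

lemma entire_of_absv_le_max:
  assumes "entire absv c" "entire absv d" "\<And>k. absv (e k) \<le> max (absv (c k)) (absv (d k))"
  shows "entire absv e"
  unfolding entire_iff_bounded using weighted_le_max_mu_ent[OF assms(1,2) _ assms(3)] by blast

lemma entire_fps_add: "entire_fps F \<Longrightarrow> entire_fps G \<Longrightarrow> entire_fps (F + G)"
  by (rule entire_of_absv_le_max[of "fps_nth F" "fps_nth G"]) (simp_all add: absv_add_le_max)

lemma entire_fps_diff: "entire_fps F \<Longrightarrow> entire_fps G \<Longrightarrow> entire_fps (F - G)"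
  by (rule entire_of_absv_le_max[of "fps_nth F" "fps_nth G"]) (simp_all add: absv_diff_le_max)

lemma entire_fps_mult:
  assumes "entire_fps F" "entire_fps G"
  shows "entire_fps (F * G)"
  unfolding entire_iff_bounded
  using absv_fps_mult_nth_weighted_le[OF mu_ent_upper[OF assms(1)] mu_ent_upper[OF assms(2)]
      mu_ent_nonneg[OF assms(1)] mu_ent_nonneg[OF assms(2)]] by blast

lemma entire_fps_const: "entire_fps (fps_const c)"
  unfolding entire_iff_bounded by (intro allI impI exI[of _ "absv c"]) simp

lemma eval_fps_add:
  assumes "entire_fps F" "entire_fps G"
  shows "eval_fps (F + G) z = eval_fps F z + eval_fps G z"
  unfolding eval_ps_eq_series_sum[of "fps_nth (F + G)"]
  using conv_absv_add[OF conv_eval_ps[OF assms(1)] conv_eval_ps[OF assms(2)], of z]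
  by (intro series_sum_eqI) (simp add: sum.distrib distrib_right)

lemma eval_fps_diff:
  assumes "entire_fps F" "entire_fps G"
  shows "eval_fps (F - G) z = eval_fps F z - eval_fps G z"
  unfolding eval_ps_eq_series_sum[of "fps_nth (F - G)"]
  using conv_absv_diff[OF conv_eval_ps[OF assms(1)] conv_eval_ps[OF assms(2)], of z]
  by (intro series_sum_eqI) (simp add: sum_subtractf left_diff_distrib)

lemma eval_fps_const [simp]: "eval_fps (fps_const c) z = c"
  using eval_ps_finite[of 1 "fps_nth (fps_const c)" z] by simp

lemma gauss_norm_const: "0 < r \<Longrightarrow> gauss_norm r (fps_const c) = absv c"
  using mu_ent_least[of "fps_nth (fps_const c)" r "absv c"]
    mu_ent_upper[OF entire_fps_const, of r c 0] by force

lemma gauss_norm_add_le: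
  assumes "entire_fps F" "entire_fps G" "0 < r"
  shows "gauss_norm r (F + G) \<le> max (gauss_norm r F) (gauss_norm r G)"
  by (rule mu_ent_least, rule weighted_le_max_mu_ent[OF assms]) (simp add: absv_add_le_max)

lemma absv_fps_mult_minus_cutoff_nth_le:
  assumes "\<And>i. absv (F $ i) * R ^ i \<le> B" "\<And>i. absv (G $ i) * R ^ i \<le> B"
    and "\<And>i. N \<le> i \<Longrightarrow> absv (F $ i) * R ^ i \<le> d" "\<And>i. N \<le> i \<Longrightarrow> absv (G $ i) * R ^ i \<le> d"
    and "0 < R" "0 \<le> d" "0 \<le> B"
  shows "absv ((F * G - fps_cutoff N F * fps_cutoff N G) $ k) * R ^ k \<le> d * B"
proof -
  have "absv ((F * G - fps_cutoff N F * fps_cutoff N G) $ k) \<le> d * B / R ^ k"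
    unfolding fps_sub_nth fps_mult_nth sum_subtractf[symmetric]
  proof (rule absv_sum_le)
    fix i assume "i \<in> {0..k}"
    then have weight: "absv (F $ i * G $ (k - i)) * R ^ k =
                       (absv (F $ i) * R ^ i) * (absv (G $ (k - i)) * R ^ (k - i))"
      by (intro absv_mult_weighted) simp
    show "absv (F $ i * G $ (k - i) - fps_cutoff N F $ i * fps_cutoff N G $ (k - i)) \<le> d * B / R ^ k"
    proof (cases "i < N \<and> k - i < N")
      case outside: False
      have "(absv (F $ i) * R ^ i) * (absv (G $ (k - i)) * R ^ (k - i)) \<le> d * B"
      proof (cases "N \<le> i")
        case True
        then show ?thesis using assms(2,3,5,6) by (intro mult_mono) auto
      next
        case False
        then have "(absv (F $ i) * R ^ i) * (absv (G $ (k - i)) * R ^ (k - i)) \<le> B * d"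
          using outside assms(1,4,5,7) by (intro mult_mono) auto
        then show ?thesis by (simp add: mult.commute)
      qed
      then have "absv (F $ i * G $ (k - i)) * R ^ k \<le> d * B" unfolding weight .
      then show ?thesis using outside assms(5) by (auto simp: pos_le_divide_eq)
    qed (use assms in simp)
  qed (use assms in simp)
  then show ?thesis using assms(5) by (simp add: pos_le_divide_eq)
qed

text \<open>F * G is compared with the product of the truncations of F and G after N terms, whose value
  is the product of the partial sums.\<close>

lemma eval_fps_mult:
  assumes F: "entire_fps F" and G: "entire_fps G"
  shows "eval_fps (F * G) z = eval_fps F z * eval_fps G z"
proof (rule absv_le_epsilon_imp_eq)
  fix e :: real assume e: "0 < e"
  define R where "R = absv z + 1"
  have R: "0 < R" "absv z \<le> R" unfolding R_def by (simp_all add: add_nonneg_pos)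
  define B where "B = max 1 (max (gauss_norm R F) (gauss_norm R G))"
  have B: "0 < B" "gauss_norm R F \<le> B" "gauss_norm R G \<le> B" unfolding B_def by auto
  have d: "0 < e / B" using e B by simp
  obtain N1 where N1: "\<And>i. N1 \<le> i \<Longrightarrow> absv (F $ i) * R ^ i \<le> e / B"
    using entire_eventually_le[OF F R(1) d] by blast
  obtain N2 where N2: "\<And>i. N2 \<le> i \<Longrightarrow> absv (G $ i) * R ^ i \<le> e / B"
    using entire_eventually_le[OF G R(1) d] by blast
  obtain N3 where N3: "\<forall>n\<ge>N3. absv ((\<Sum>k<n. F $ k * z ^ k) * (\<Sum>k<n. G $ k * z ^ k)
                                  - eval_fps F z * eval_fps G z) < e"
    using conv_absv_mult[OF conv_eval_ps[OF F] conv_eval_ps[OF G]] e unfolding conv_absv_def by blast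
  define N where "N = max N1 (max N2 N3)"
  let ?P = "fps_cutoff N F * fps_cutoff N G"
  have "absv ((F * G - ?P) $ k) * absv z ^ k \<le> e" for k
  proof -
    have "absv ((F * G - ?P) $ k) * R ^ k \<le> e / B * B"
      using mu_ent_upper[OF F R(1)] mu_ent_upper[OF G R(1)] N1 N2 B d R(1)
      by (intro absv_fps_mult_minus_cutoff_nth_le) (auto simp: N_def intro: order_trans)
    moreover have "absv ((F * G - ?P) $ k) * absv z ^ k \<le> absv ((F * G - ?P) $ k) * R ^ k"
      using R by (intro mult_left_mono power_mono) auto
    ultimately show ?thesis using B by simp
  qed
  moreover have "?P $ k = 0" if "2 * N \<le> k" for k
    unfolding fps_mult_nth using that by (intro sum.neutral) auto
  ultimately have "absv (eval_fps (F * G) z - (\<Sum>k<2 * N. ?P $ k * z ^ k)) \<le> e"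
    by (intro absv_eval_ps_minus_poly_le entire_fps_mult F G) simp_all
  moreover have "absv ((\<Sum>k<2 * N. ?P $ k * z ^ k) - eval_fps F z * eval_fps G z) \<le> e"
    using N3 unfolding sum_mult_sum_eq_cutoff_mult[symmetric] N_def by (auto intro: less_imp_le)
  ultimately show "absv (eval_fps (F * G) z - eval_fps F z * eval_fps G z) \<le> e"
    using absv_add_le[of "eval_fps (F * G) z - (\<Sum>k<2 * N. ?P $ k * z ^ k)"] by fastforce
qed

text \<open>Gauss's lemma: the product of the last maximal terms of the two factors strictly
  dominates every other contribution to this coefficient.\<close>

lemma absv_fps_mult_nth_at_last_maxima:
  assumes r: "0 < r" and XY: "0 < X" "0 < Y"
    and F: "\<And>i. absv (F $ i) * r ^ i \<le> X" "absv (F $ i0) * r ^ i0 = X"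
           "\<And>i. i0 < i \<Longrightarrow> absv (F $ i) * r ^ i < X"
    and G: "\<And>j. absv (G $ j) * r ^ j \<le> Y" "absv (G $ j0) * r ^ j0 = Y"
           "\<And>j. j0 < j \<Longrightarrow> absv (G $ j) * r ^ j < Y"
  shows "absv ((F * G) $ (i0 + j0)) * r ^ (i0 + j0) = X * Y"
proof -
  define k where "k = i0 + j0"
  have main: "absv (F $ i0 * G $ (k - i0)) * r ^ k = X * Y"
    using absv_mult_weighted[of i0 k "F $ i0" "G $ (k - i0)" r] F(2) G(2) by (simp add: k_def)
  have rest: "absv (\<Sum>i\<in>{0..k} - {i0}. F $ i * G $ (k - i)) < X * Y / r ^ k"
  proof (rule absv_sum_less)
    fix i assume i: "i \<in> {0..k} - {i0}"
    have "absv (F $ i * G $ (k - i)) * r ^ k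
          = (absv (F $ i) * r ^ i) * (absv (G $ (k - i)) * r ^ (k - i))"
      using i by (intro absv_mult_weighted) simp
    also have "\<dots> < X * Y"
    proof (rule mult_less_mult_if_one_less)
      show "absv (F $ i) * r ^ i < X \<or> absv (G $ (k - i)) * r ^ (k - i) < Y"
        using i F(3) G(3)[of "k - i"] by (cases "i < i0") (auto simp: k_def)
    qed (use r XY F(1) G(1) in auto)
    finally show "absv (F $ i * G $ (k - i)) < X * Y / r ^ k"
      using r by (simp add: pos_less_divide_eq)
  qed (use r XY in simp_all)
  have "(F * G) $ k = F $ i0 * G $ (k - i0) + (\<Sum>i\<in>{0..k} - {i0}. F $ i * G $ (k - i))"
    unfolding fps_mult_nth by (subst sum.remove[of _ i0]) (auto simp: k_def)
  then have "absv ((F * G) $ k) = absv (F $ i0 * G $ (k - i0))"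
    using absv_add_eq_dominant rest main r by (simp add: pos_divide_less_eq flip: main)
  then show ?thesis using main by (simp add: k_def)
qed

lemma gauss_norm_mult:
  assumes F: "entire_fps F" and G: "entire_fps G" and r: "0 < r"
  shows "gauss_norm r (F * G) = gauss_norm r F * gauss_norm r G"
proof (rule antisym)
  show "gauss_norm r (F * G) \<le> gauss_norm r F * gauss_norm r G"
    by (rule mu_ent_least, rule absv_fps_mult_nth_weighted_le[OF mu_ent_upper[OF F r]
          mu_ent_upper[OF G r] mu_ent_nonneg[OF F r] mu_ent_nonneg[OF G r] r])
  show "gauss_norm r F * gauss_norm r G \<le> gauss_norm r (F * G)"
  proof (cases "0 < gauss_norm r F \<and> 0 < gauss_norm r G")
    case False
    then have "gauss_norm r F * gauss_norm r G = 0"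
      using mu_ent_nonneg[OF F r] mu_ent_nonneg[OF G r] by force
    then show ?thesis using mu_ent_nonneg[OF entire_fps_mult[OF F G] r] by linarith
  next
    case True
    obtain i0 where "gauss_norm r F = absv (F $ i0) * r ^ i0"
      "\<And>i. i0 < i \<Longrightarrow> absv (F $ i) * r ^ i < gauss_norm r F"
      using mu_ent_attained_last[OF F r] True by blast
    moreover obtain j0 where "gauss_norm r G = absv (G $ j0) * r ^ j0"
      "\<And>j. j0 < j \<Longrightarrow> absv (G $ j) * r ^ j < gauss_norm r G"
      using mu_ent_attained_last[OF G r] True by blast
    ultimately have "absv ((F * G) $ (i0 + j0)) * r ^ (i0 + j0) = gauss_norm r F * gauss_norm r G"
      using True mu_ent_upper[OF F r] mu_ent_upper[OF G r]
      by (intro absv_fps_mult_nth_at_last_maxima[OF r]) simp_all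
    then show ?thesis using mu_ent_upper[OF entire_fps_mult[OF F G] r, of "i0 + j0"] by simp
  qed
qed

lemma absv_eval_ps_minus_lowest_term_le:
  assumes "entire absv c" "\<And>i. i < k \<Longrightarrow> c i = 0" "absv z \<le> 1"
  shows "absv (eval_ps absv c z - c k * z ^ k) \<le> mu_ent absv 1 c * absv z ^ Suc k"
proof -
  have "(\<Sum>n<Suc k. c n * z ^ n) = c k * z ^ k" using assms(2) by (simp add: sum.neutral)
  moreover have "absv (eval_ps absv c z - (\<Sum>n<Suc k. c n * z ^ n)) \<le> mu_ent absv 1 c * absv z ^ Suc k"
  proof (rule absv_series_tail_le[OF conv_eval_ps[OF assms(1)]])
    fix n assume "Suc k \<le> n"
    have "absv (c n * z ^ n) \<le> mu_ent absv 1 c * absv z ^ n"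
      using mu_ent_upper[OF assms(1), of 1 n] by (simp add: mult_right_mono)
    also have "\<dots> \<le> mu_ent absv 1 c * absv z ^ Suc k"
      using \<open>Suc k \<le> n\<close> assms mu_ent_nonneg[OF assms(1), of 1]
      by (intro mult_left_mono power_decreasing) auto
    finally show "absv (c n * z ^ n) \<le> mu_ent absv 1 c * absv z ^ Suc k" .
  qed
  ultimately show ?thesis by simp
qed

text \<open>Identity theorem: near 0 the lowest nonzero term dominates the rest of the series.\<close>

lemma entire_fps_eval_eq_0_imp_eq_0:
  assumes F: "entire_fps F" and zero: "\<And>z. eval_fps F z = 0"
  shows "F = 0"
proof (rule ccontr)
  assume "F \<noteq> 0"
  define k where "k = subdegree F"
  have Fk: "F $ k \<noteq> 0" using \<open>F \<noteq> 0\<close> unfolding k_def by simp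
  define M where "M = mu_ent absv 1 (fps_nth F)"
  have M: "0 \<le> M" unfolding M_def by (rule mu_ent_nonneg[OF F]) simp
  have "0 < min 1 (absv (F $ k) / (M + 1))" using Fk M by simp
  then obtain z where z: "z \<noteq> 0" "absv z < min 1 (absv (F $ k) / (M + 1))"
    using exists_absv_small by blast
  have "M * absv z < absv (F $ k)"
  proof -
    have "(M + 1) * absv z < absv (F $ k)" using z M by (simp add: pos_less_divide_eq mult.commute)
    then show ?thesis using absv_nonneg[of z] unfolding distrib_right by linarith
  qed
  then have "M * absv z ^ Suc k < absv (F $ k * z ^ k)"
    using z by (simp add: mult.assoc[symmetric] mult_strict_right_mono)
  moreover have "absv (eval_fps F z - F $ k * z ^ k) \<le> M * absv z ^ Suc k"
    unfolding M_def using z by (intro absv_eval_ps_minus_lowest_term_le[OF F]) (auto simp: k_def)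
  ultimately have "absv (F $ k * z ^ k + (eval_fps F z - F $ k * z ^ k)) = absv (F $ k * z ^ k)"
    by (intro absv_add_eq_dominant) simp
  then show False using zero[of z] Fk z by simp
qed

lemma entire_fps_eval_inject:
  assumes "entire_fps F" "entire_fps G" "\<And>z. eval_fps F z = eval_fps G z"
  shows "F = G"
  using entire_fps_eval_eq_0_imp_eq_0[OF entire_fps_diff[OF assms(1,2)]]
  by (simp add: eval_fps_diff assms)

section \<open>Affine substitution\<close>

text \<open>The coefficients of z \<mapsto> F(a z + b), obtained by expanding each (a z + b)^n binomially
  and collecting powers of z.\<close>

definition affine_comp_fps :: "'a \<Rightarrow> 'a \<Rightarrow> 'a fps \<Rightarrow> 'a fps" where
  "affine_comp_fps a b F =
     Abs_fps (\<lambda>k. a ^ k * series_sum (\<lambda>n. F $ n * of_nat (n choose k) * b ^ (n - k)))"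

lemma absv_binomial_term_weighted_le:
  assumes "absv b \<le> r" "0 \<le> r"
  shows "absv (x * of_nat (n choose k) * b ^ (n - k)) * r ^ k \<le> absv x * r ^ n"
proof (cases "k \<le> n")
  case True
  have "absv (x * of_nat (n choose k) * b ^ (n - k)) =
        absv x * absv (of_nat (n choose k)) * absv b ^ (n - k)" by simp
  also have "\<dots> \<le> absv x * 1 * r ^ (n - k)"
    using absv_of_nat_le_1[of "n choose k"] assms by (intro mult_mono power_mono) auto
  finally have "absv (x * of_nat (n choose k) * b ^ (n - k)) * r ^ k \<le> absv x * r ^ (n - k) * r ^ k"
    using assms by (intro mult_right_mono) auto
  then show ?thesis using True by (simp add: mult.assoc flip: power_add)
qed (use assms in \<open>simp add: binomial_eq_0\<close>)

lemma binomial_terms_tendsto_0: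
  assumes "entire absv c"
  shows "(\<lambda>n. absv (c n * of_nat (n choose k) * b ^ (n - k))) \<longlonglongrightarrow> 0"
proof (rule tendsto_sandwich[OF _ _ tendsto_const])
  define r where "r = absv b + 1"
  have r: "0 < r" "absv b \<le> r" unfolding r_def by (simp_all add: add_nonneg_pos)
  show "(\<lambda>n. absv (c n) * r ^ n / r ^ k) \<longlonglongrightarrow> 0"
    using assms r unfolding entire_def by (auto intro: tendsto_divide_zero)
  show "\<forall>\<^sub>F n in sequentially. absv (c n * of_nat (n choose k) * b ^ (n - k)) \<le> absv (c n) * r ^ n / r ^ k"
    using absv_binomial_term_weighted_le[OF r(2) less_imp_le[OF r(1)]] r(1)
    by (simp add: pos_le_divide_eq)
qed simp

lemma absv_affine_comp_fps_nth_weighted_le: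
  assumes F: "entire_fps F" and "absv a = 1" "0 < r" "absv b \<le> r"
  shows "absv (affine_comp_fps a b F $ k) * r ^ k \<le> gauss_norm r F"
proof -
  have "absv (series_sum (\<lambda>n. F $ n * of_nat (n choose k) * b ^ (n - k))) \<le> gauss_norm r F / r ^ k"
  proof (rule absv_series_sum_le[OF binomial_terms_tendsto_0[OF F]])
    fix n
    have "absv (F $ n * of_nat (n choose k) * b ^ (n - k)) * r ^ k \<le> gauss_norm r F"
      using absv_binomial_term_weighted_le[of b r "F $ n" n k] mu_ent_upper[OF F \<open>0 < r\<close>, of n]
        assms by linarith
    then show "absv (F $ n * of_nat (n choose k) * b ^ (n - k)) \<le> gauss_norm r F / r ^ k"
      using \<open>0 < r\<close> by (simp add: pos_le_divide_eq)
  qed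
  then show ?thesis using assms by (simp add: affine_comp_fps_def pos_le_divide_eq)
qed

lemma entire_affine_comp_fps:
  assumes F: "entire_fps F" and a: "absv a = 1"
  shows "entire_fps (affine_comp_fps a b F)"
  unfolding entire_iff_bounded
proof (intro allI impI)
  fix r :: real assume r: "0 < r"
  define R where "R = r + absv b"
  have R: "0 < R" "absv b \<le> R" "r \<le> R" unfolding R_def using r by (simp_all add: add_pos_nonneg)
  have "absv (affine_comp_fps a b F $ k) * r ^ k \<le> gauss_norm R F" for k
    using absv_affine_comp_fps_nth_weighted_le[OF F a R(1,2), of k] R r
    by (meson mult_left_mono power_mono absv_nonneg less_imp_le order_trans)
  then show "\<exists>B. \<forall>k. absv (affine_comp_fps a b F $ k) * r ^ k \<le> B" by blast
qed

lemma gauss_norm_affine_comp_fps_le: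
  "entire_fps F \<Longrightarrow> absv a = 1 \<Longrightarrow> 0 < r \<Longrightarrow> absv b \<le> r \<Longrightarrow>
     gauss_norm r (affine_comp_fps a b F) \<le> gauss_norm r F"
  by (rule mu_ent_least) (rule absv_affine_comp_fps_nth_weighted_le)

lemma absv_affine_comp_fps_nth_minus_partial_le:
  assumes F: "entire_fps F" and a: "absv a = 1" and R: "0 < R" "absv b \<le> R" and e: "0 < e"
    and tail: "\<And>n. N \<le> n \<Longrightarrow> absv (F $ n) * R ^ n \<le> e"
  shows "absv (affine_comp_fps a b F $ k -
           (if k < N then a ^ k * (\<Sum>n<N. F $ n * of_nat (n choose k) * b ^ (n - k)) else 0))
         * R ^ k \<le> e"
proof -
  let ?x = "\<lambda>n. F $ n * of_nat (n choose k) * b ^ (n - k)"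
  have small: "absv (?x n) \<le> e / R ^ k" if "N \<le> n \<or> n < k" for n
  proof (cases "n < k")
    case False
    then have "absv (?x n) * R ^ k \<le> e"
      using that absv_binomial_term_weighted_le[OF R(2) less_imp_le[OF R(1)], of "F $ n" n k]
        tail[of n] by linarith
    then show ?thesis using R(1) by (simp add: pos_le_divide_eq)
  qed (use e R in \<open>simp add: binomial_eq_0\<close>)
  have "absv (affine_comp_fps a b F $ k -
          (if k < N then a ^ k * (\<Sum>n<N. ?x n) else 0)) \<le> e / R ^ k"
  proof (cases "k < N")
    case True
    have "absv (series_sum ?x - (\<Sum>n<N. ?x n)) \<le> e / R ^ k"
      by (rule absv_series_tail_le[OF conv_series_sum[OF binomial_terms_tendsto_0[OF F]]])
        (use small in blast)
    then show ?thesis using True a by (simp add: affine_comp_fps_def flip: right_diff_distrib)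
  next
    case False
    have "absv (series_sum ?x) \<le> e / R ^ k"
      by (rule absv_series_sum_le[OF binomial_terms_tendsto_0[OF F]]) (use small False in force)
    then show ?thesis using False a by (simp add: affine_comp_fps_def)
  qed
  then show ?thesis using R(1) by (simp add: pos_le_divide_eq)
qed

lemma eval_fps_affine_comp:
  assumes F: "entire_fps F" and a: "absv a = 1"
  shows "eval_fps (affine_comp_fps a b F) z = eval_fps F (a * z + b)"
proof (rule absv_le_epsilon_imp_eq)
  fix e :: real assume e: "0 < e"
  define R where "R = absv z + absv b + 1"
  have R: "0 < R" "absv z \<le> R" "absv b \<le> R"
    unfolding R_def using absv_nonneg[of z] absv_nonneg[of b] by linarith+
  obtain N1 where N1: "\<And>n. N1 \<le> n \<Longrightarrow> absv (F $ n) * R ^ n \<le> e"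
    using entire_eventually_le[OF F R(1) e] by blast
  obtain N2 where N2: "\<forall>n\<ge>N2. absv ((\<Sum>k<n. F $ k * (a * z + b) ^ k) - eval_fps F (a * z + b)) < e"
    using conv_eval_ps[OF F, of "a * z + b"] e unfolding conv_absv_def by blast
  define N where "N = max N1 N2"
  define P where "P k = (if k < N then a ^ k * (\<Sum>n<N. F $ n * of_nat (n choose k) * b ^ (n - k)) else 0)"
    for k
  have "absv (affine_comp_fps a b F $ k - P k) * absv z ^ k \<le> e" for k
  proof -
    have "absv (affine_comp_fps a b F $ k - P k) * R ^ k \<le> e"
      unfolding P_def using N1 by (intro absv_affine_comp_fps_nth_minus_partial_le[OF F a R(1,3) e])
        (simp add: N_def)
    moreover have "absv (affine_comp_fps a b F $ k - P k) * absv z ^ k \<le>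
                   absv (affine_comp_fps a b F $ k - P k) * R ^ k"
      using R by (intro mult_left_mono power_mono) auto
    ultimately show ?thesis by linarith
  qed
  then have "absv (eval_fps (affine_comp_fps a b F) z - (\<Sum>k<N. P k * z ^ k)) \<le> e"
    by (intro absv_eval_ps_minus_poly_le entire_affine_comp_fps[OF F a]) (simp_all add: P_def)
  moreover have "(\<Sum>k<N. P k * z ^ k) = (\<Sum>n<N. F $ n * (a * z + b) ^ n)"
    unfolding sum_affine_power_reexpand P_def by simp
  then have "absv ((\<Sum>k<N. P k * z ^ k) - eval_fps F (a * z + b)) \<le> e"
    using N2 unfolding N_def by (auto intro: less_imp_le)
  ultimately show "absv (eval_fps (affine_comp_fps a b F) z - eval_fps F (a * z + b)) \<le> e"
    using absv_add_le[of "eval_fps (affine_comp_fps a b F) z - (\<Sum>k<N. P k * z ^ k)"] by fastforce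
qed

text \<open>Equality comes from composing with the inverse map z \<mapsto> (z - b) / a, which satisfies
  the same hypotheses.\<close>

lemma gauss_norm_affine_comp_fps:
  assumes F: "entire_fps F" and a: "absv a = 1" and r: "0 < r" and b: "absv b \<le> r"
  shows "gauss_norm r (affine_comp_fps a b F) = gauss_norm r F"
proof (rule antisym)
  show "gauss_norm r (affine_comp_fps a b F) \<le> gauss_norm r F"
    by (rule gauss_norm_affine_comp_fps_le[OF F a r b])
  define a' where "a' = inverse a"
  define b' where "b' = - b * inverse a"
  have a': "absv a' = 1" and b': "absv b' \<le> r" unfolding a'_def b'_def using a b by simp_all
  have comp: "entire_fps (affine_comp_fps a b F)" by (rule entire_affine_comp_fps[OF F a])
  have "affine_comp_fps a' b' (affine_comp_fps a b F) = F"
  proof (rule entire_fps_eval_inject[OF entire_affine_comp_fps[OF comp a'] F])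
    fix z
    have "a * (a' * z + b') + b = z" unfolding a'_def b'_def using a by (auto simp: field_simps)
    then show "eval_fps (affine_comp_fps a' b' (affine_comp_fps a b F)) z = eval_fps F z"
      by (simp add: eval_fps_affine_comp[OF comp a'] eval_fps_affine_comp[OF F a])
  qed
  then show "gauss_norm r F \<le> gauss_norm r (affine_comp_fps a b F)"
    using gauss_norm_affine_comp_fps_le[OF comp a' r b'] by simp
qed

section \<open>Meromorphic quotients\<close>

text \<open>The two cross products agree wherever H1 H2 does not vanish, so multiplied by H1 H2 they
  agree everywhere; the identity theorem and the absence of zero divisors in \<open>'a fps\<close> finish.\<close>

lemma mero_rep_fps_cross_mult_eq:
  assumes R1: "mero_rep absv F (fps_nth G1) (fps_nth H1)"
    and R2: "mero_rep absv F (fps_nth G2) (fps_nth H2)"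
  shows "G1 * H2 = G2 * H1"
proof -
  have G1: "entire_fps G1" and H1: "entire_fps H1" and G2: "entire_fps G2" and H2: "entire_fps H2"
    and "H1 \<noteq> 0" "H2 \<noteq> 0"
    using R1 R2 unfolding mero_rep_def fps_nonzero_nth by auto
  let ?D = "G1 * H2 - G2 * H1"
  have D: "entire_fps ?D" by (intro entire_fps_diff entire_fps_mult G1 G2 H1 H2)
  have "eval_fps (?D * (H1 * H2)) z = 0" for z
  proof (cases "eval_fps H1 z = 0 \<or> eval_fps H2 z = 0")
    case False
    then have "eval_fps G1 z / eval_fps H1 z = eval_fps G2 z / eval_fps H2 z"
      using R1 R2 unfolding mero_rep_def by metis
    then show ?thesis using False
      by (simp add: eval_fps_mult eval_fps_diff entire_fps_mult D G1 G2 H1 H2 field_simps)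
  qed (auto simp: eval_fps_mult entire_fps_mult D H1 H2)
  then have "?D * (H1 * H2) = 0"
    by (intro entire_fps_eval_eq_0_imp_eq_0 entire_fps_mult D H1 H2)
  then show ?thesis using \<open>H1 \<noteq> 0\<close> \<open>H2 \<noteq> 0\<close> by simp
qed

lemma mu_mero_eq:
  assumes r: "0 < r" and R: "mero_rep absv F (fps_nth G) (fps_nth H)"
  shows "mu_mero absv r F = gauss_norm r G / gauss_norm r H"
proof -
  obtain g h where gh: "mero_rep absv F g h" "mu_mero absv r F = mu_ent absv r g / mu_ent absv r h"
    using someI_ex[of "\<lambda>v. \<exists>g h. mero_rep absv F g h \<and> v = mu_ent absv r g / mu_ent absv r h"] R
    unfolding mu_mero_def by blast
  then have R': "mero_rep absv F (fps_nth (Abs_fps g)) (fps_nth (Abs_fps h))"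
    by (simp add: fps_nth_Abs_fps_eq)
  have G: "entire_fps G" and H: "entire_fps H" and G': "entire_fps (Abs_fps g)"
    and H': "entire_fps (Abs_fps h)" and "0 < gauss_norm r H" "0 < gauss_norm r (Abs_fps h)"
    using R R' r by (auto simp: mero_rep_def mu_ent_pos_iff)
  moreover have "gauss_norm r (Abs_fps g) * gauss_norm r H = gauss_norm r G * gauss_norm r (Abs_fps h)"
    using mero_rep_fps_cross_mult_eq[OF R' R] gauss_norm_mult G H G' H' r by metis
  ultimately show ?thesis unfolding gh(2) by (simp add: fps_nth_Abs_fps_eq frac_eq_eq)
qed

definition mero_mu_le_1 :: "real \<Rightarrow> ('a \<Rightarrow> 'a) \<Rightarrow> bool" where
  "mero_mu_le_1 r F \<longleftrightarrow>
     (\<exists>G H. mero_rep absv F (fps_nth G) (fps_nth H) \<and> gauss_norm r G \<le> gauss_norm r H)"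

lemma m_prox_eq_0_if_mero_mu_le_1:
  assumes r: "0 < r" and F: "mero_mu_le_1 r F"
  shows "m_prox absv r F = 0"
proof -
  obtain G H where R: "mero_rep absv F (fps_nth G) (fps_nth H)" and le: "gauss_norm r G \<le> gauss_norm r H"
    using F unfolding mero_mu_le_1_def by blast
  then have "0 < gauss_norm r H" "0 \<le> gauss_norm r G"
    using r by (auto simp: mero_rep_def mu_ent_pos_iff mu_ent_nonneg)
  then have "0 \<le> mu_mero absv r F" "mu_mero absv r F \<le> 1"
    using le unfolding mu_mero_eq[OF r R] by simp_all
  then have "ln (mu_mero absv r F) \<le> 0" by (cases "mu_mero absv r F = 0") auto
  then show ?thesis unfolding m_prox_def by simp
qed

lemma mero_mu_le_1_zero: "0 < r \<Longrightarrow> mero_mu_le_1 r (\<lambda>z. 0)"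
  unfolding mero_mu_le_1_def mero_rep_def
  using entire_fps_const[of 0] entire_fps_const[of 1] eval_fps_const[of 0] eval_fps_const[of 1]
    gauss_norm_const[of r 0] gauss_norm_const[of r 1]
  by (intro exI[of _ 0] exI[of _ 1]) (auto intro: exI[of _ 0])

lemma mero_mu_le_1_add:
  assumes r: "0 < r" and "mero_mu_le_1 r F1" "mero_mu_le_1 r F2"
  shows "mero_mu_le_1 r (\<lambda>z. F1 z + F2 z)"
proof -
  obtain G1 H1 G2 H2 where R1: "mero_rep absv F1 (fps_nth G1) (fps_nth H1)"
    and R2: "mero_rep absv F2 (fps_nth G2) (fps_nth H2)"
    and le: "gauss_norm r G1 \<le> gauss_norm r H1" "gauss_norm r G2 \<le> gauss_norm r H2"
    using assms unfolding mero_mu_le_1_def by blast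
  have G1: "entire_fps G1" and H1: "entire_fps H1" and G2: "entire_fps G2" and H2: "entire_fps H2"
    and "H1 * H2 \<noteq> 0"
    using R1 R2 unfolding mero_rep_def fps_nonzero_nth[symmetric] by auto
  have "mero_rep absv (\<lambda>z. F1 z + F2 z) (fps_nth (G1 * H2 + G2 * H1)) (fps_nth (H1 * H2))"
    unfolding mero_rep_def
  proof (intro conjI allI impI entire_fps_add entire_fps_mult G1 G2 H1 H2)
    show "\<exists>n. (H1 * H2) $ n \<noteq> 0" using \<open>H1 * H2 \<noteq> 0\<close> fps_nonzero_nth by blast
    fix z assume "eval_fps (H1 * H2) z \<noteq> 0"
    then have "eval_fps H1 z \<noteq> 0" "eval_fps H2 z \<noteq> 0" by (simp_all add: eval_fps_mult H1 H2)
    then show "F1 z + F2 z = eval_fps (G1 * H2 + G2 * H1) z / eval_fps (H1 * H2) z"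
      using R1 R2 unfolding mero_rep_def
      by (simp add: eval_fps_add eval_fps_mult entire_fps_mult G1 G2 H1 H2 field_simps)
  qed
  moreover have "gauss_norm r (G1 * H2 + G2 * H1) \<le> gauss_norm r (H1 * H2)"
  proof -
    have "gauss_norm r G1 * gauss_norm r H2 \<le> gauss_norm r H1 * gauss_norm r H2"
      using le(1) mu_ent_nonneg[OF H2 r] by (rule mult_right_mono)
    moreover have "gauss_norm r G2 * gauss_norm r H1 \<le> gauss_norm r H1 * gauss_norm r H2"
      using mult_right_mono[OF le(2) mu_ent_nonneg[OF H1 r]] by (simp add: mult.commute)
    ultimately show ?thesis
      using gauss_norm_add_le[OF entire_fps_mult[OF G1 H2] entire_fps_mult[OF G2 H1] r]
      by (simp add: gauss_norm_mult G1 G2 H1 H2 r)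
  qed
  ultimately show ?thesis unfolding mero_mu_le_1_def by blast
qed

lemma mero_mu_le_1_of_int_mult:
  assumes r: "0 < r" and "mero_mu_le_1 r F"
  shows "mero_mu_le_1 r (\<lambda>z. of_int n * F z)"
proof -
  obtain G H where R: "mero_rep absv F (fps_nth G) (fps_nth H)" and le: "gauss_norm r G \<le> gauss_norm r H"
    using assms unfolding mero_mu_le_1_def by blast
  have G: "entire_fps G" using R unfolding mero_rep_def by blast
  let ?c = "fps_const (of_int n)"
  have "mero_rep absv (\<lambda>z. of_int n * F z) (fps_nth (?c * G)) (fps_nth H)"
    using R unfolding mero_rep_def by (simp add: entire_fps_mult entire_fps_const eval_fps_mult G)
  moreover have "absv (of_int n) * gauss_norm r G \<le> gauss_norm r G"
    using absv_of_int_le_1[of n] mu_ent_nonneg[OF G r] by (intro mult_left_le_one_le) auto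
  then have "gauss_norm r (?c * G) \<le> gauss_norm r H"
    using le by (simp add: gauss_norm_mult entire_fps_const G r gauss_norm_const)
  ultimately show ?thesis unfolding mero_mu_le_1_def by blast
qed

lemma mero_mu_le_1_sum:
  "0 < r \<Longrightarrow> (\<And>i. i \<in> S \<Longrightarrow> mero_mu_le_1 r (F i)) \<Longrightarrow> mero_mu_le_1 r (\<lambda>z. \<Sum>i\<in>S. F i z)"
proof (induction S rule: infinite_finite_induct)
  case (insert i S)
  then show ?case using mero_mu_le_1_add[of r "F i" "\<lambda>z. \<Sum>i\<in>S. F i z"] by simp
qed (simp_all add: mero_mu_le_1_zero)

lemma mero_mu_le_1_affine_quotient:
  assumes G: "entire_fps G" "G \<noteq> 0" and H: "entire_fps H" "H \<noteq> 0"
    and a: "absv a = 1" and r: "0 < r" and b: "absv b \<le> r"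
  shows "mero_mu_le_1 r
           (\<lambda>z. (eval_fps G (a * z + b) / eval_fps H (a * z + b)) / (eval_fps G z / eval_fps H z))"
proof -
  let ?GL = "affine_comp_fps a b G" and ?HL = "affine_comp_fps a b H"
  have GL: "entire_fps ?GL" and HL: "entire_fps ?HL"
    using entire_affine_comp_fps a G H by blast+
  have "0 < gauss_norm r ?HL"
    using H r by (simp add: gauss_norm_affine_comp_fps a b mu_ent_pos_iff flip: fps_nonzero_nth)
  then have "?HL * G \<noteq> 0" using HL G r by (auto simp: mu_ent_pos_iff fps_nonzero_nth)
  have "mero_rep absv
          (\<lambda>z. (eval_fps G (a * z + b) / eval_fps H (a * z + b)) / (eval_fps G z / eval_fps H z))
          (fps_nth (?GL * H)) (fps_nth (?HL * G))"
    unfolding mero_rep_def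
  proof (intro conjI allI impI entire_fps_mult GL HL G H)
    show "\<exists>n. (?HL * G) $ n \<noteq> 0" using \<open>?HL * G \<noteq> 0\<close> fps_nonzero_nth by blast
    fix z assume "eval_fps (?HL * G) z \<noteq> 0"
    then show "eval_fps G (a * z + b) / eval_fps H (a * z + b) / (eval_fps G z / eval_fps H z) =
               eval_fps (?GL * H) z / eval_fps (?HL * G) z"
      by (cases "eval_fps H z = 0")
        (simp_all add: eval_fps_mult eval_fps_affine_comp GL HL G H a field_simps)
  qed
  moreover have "gauss_norm r (?GL * H) = gauss_norm r (?HL * G)"
    by (simp add: gauss_norm_mult gauss_norm_affine_comp_fps GL HL G H a r b)
  ultimately show ?thesis unfolding mero_mu_le_1_def by (blast intro: eq_refl)
qed

end

theorem corollary2p4: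
  fixes absv :: "'a::field_char_0 \<Rightarrow> real"
    and a b :: 'a and g h :: "nat \<Rightarrow> 'a" and m :: nat and r :: real
  assumes "kappa_field absv"
    and "absv a = 1"
    and "entire absv g" and "entire absv h"
    and "\<exists>n. h n \<noteq> 0" and "\<exists>n. g n \<noteq> 0"
    and "m \<ge> 1"
    and "r > absv b"
  shows "let L = (\<lambda>z. a * z + b); f = (\<lambda>z. eval_ps absv g z / eval_ps absv h z) in
           m_prox absv r (\<lambda>z. f (L z) / f z) = 0 \<and>
           m_prox absv r (\<lambda>z. ((delta_L L ^^ m) f) z / f z) = 0"
proof -
  interpret complete_nonarch_field absv
    using assms(1) unfolding kappa_field_def by unfold_locales auto
  define L where "L = (\<lambda>z. a * z + b)"
  define f where "f = (\<lambda>z. eval_ps absv g z / eval_ps absv h z)"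
  have r: "0 < r" using assms(8) absv_nonneg[of b] by linarith
  have quotient: "mero_mu_le_1 r (\<lambda>z. f ((L ^^ k) z) / f z)" for k
  proof -
    have "absv ((\<Sum>j<k. a ^ j) * b) \<le> r"
      using absv_geometric_sum_mult_le[OF assms(2), of k b] assms(8) by simp
    then show ?thesis
      using mero_mu_le_1_affine_quotient[of "Abs_fps g" "Abs_fps h" "a ^ k" r "(\<Sum>j<k. a ^ j) * b"]
        assms(2-6) r
      by (simp add: L_def f_def affine_funpow fps_nth_Abs_fps_eq fps_nonzero_nth)
  qed
  obtain w :: "nat \<Rightarrow> int" where
    w: "\<forall>z. (delta_L L ^^ m) f z = (\<Sum>k\<le>m. of_int (w k) * f ((L ^^ k) z))"
    using delta_L_funpow_int_combination by blast
  have "mero_mu_le_1 r (\<lambda>z. \<Sum>k\<le>m. of_int (w k) * (f ((L ^^ k) z) / f z))"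
    using r quotient by (intro mero_mu_le_1_sum mero_mu_le_1_of_int_mult)
  then have "mero_mu_le_1 r (\<lambda>z. (delta_L L ^^ m) f z / f z)"
    by (simp add: w sum_divide_distrib)
  moreover have "mero_mu_le_1 r (\<lambda>z. f (L z) / f z)" using quotient[of 1] by simp
  ultimately show ?thesis
    using m_prox_eq_0_if_mero_mu_le_1[OF r] unfolding L_def f_def Let_def by blast
qed

end
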